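(* For integer exponents $j$ of powers $w^j$ of factors $w$ occurring in a 3iet word $u_{\varepsilon,\ell}$ we have $$ j\leq 2+ \sup_{n\in\mathbb N} a_n\,, $$ where $\varepsilon=[0,a_1,a_2,\dots]$ is the continued fraction expansion of $\varepsilon$.
   Context: Parameters $\varepsilon,\ell$ satisfy $\varepsilon\in(0,1)\setminus\mathbb Q$ and $\max\{\varepsilon,1-\varepsilon\}<\ell<1$. The three interval exchange $T_{\varepsilon,\ell}:[0,\ell)\to[0,\ell)$ is defined by $T_{\varepsilon,\ell}(x)=x+1-\varepsilon$ for $x\in I_A:=[0,\ell-1+\varepsilon)$, $T_{\varepsilon,\ell}(x)=x+1-2\varepsilon$ for $x\in I_B:=[\ell-1+\varepsilon,\varepsilon)$, and $T_{\varepsilon,\ell}(x)=x-\varepsilon$ for $x\in I_C:=[\varepsilon,\ell)$. A 3iet word $u_{\varepsilon,\ell}$ with parameters $\varepsilon,\ell$ is the word $(u_n)_{n\in\mathbb N}$ over $\{A,B,C\}$ with $u_n=X$ iff $T_{\varepsilon,\ell}^n(x_0)\in I_X$, for some $x_0\in[0,\ell)$. For an integer $j$, $w^j$ denotes the concatenation of $j$ copies of $w$. *)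

theory Defs
  imports Complex_Main "HOL-Library.Extended_Real"
begin

datatype letter = A | B | C

definition T3 :: "real \<Rightarrow> real \<Rightarrow> real \<Rightarrow> real" where
  "T3 e l x =
     (if x < l - 1 + e then x + 1 - e
      else if x < e then x + 1 - 2 * e
      else x - e)"

definition letter_of :: "real \<Rightarrow> real \<Rightarrow> real \<Rightarrow> letter" where
  "letter_of e l x =
     (if 0 \<le> x \<and> x < l - 1 + e then A
      else if l - 1 + e \<le> x \<and> x < e then B
      else C)"

definition iet_word :: "real \<Rightarrow> real \<Rightarrow> real \<Rightarrow> nat \<Rightarrow> letter" where
  "iet_word e l x0 n = letter_of e l ((T3 e l ^^ n) x0)"

fun cf_rem :: "real \<Rightarrow> nat \<Rightarrow> real" where
  "cf_rem x 0 = x"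
| "cf_rem x (Suc n) = frac (1 / cf_rem x n)"

text \<open>Partial quotients: x = [0; a_1, a_2, ...] for x in (0,1) irrational.\<close>
definition cf_quot :: "real \<Rightarrow> nat \<Rightarrow> int" where
  "cf_quot x n = (if n = 0 then \<lfloor>x\<rfloor> else \<lfloor>1 / cf_rem x (n - 1)\<rfloor>)"

definition power_word :: "'a list \<Rightarrow> nat \<Rightarrow> 'a list" where
  "power_word w j = concat (replicate j w)"

definition is_factor :: "'a list \<Rightarrow> (nat \<Rightarrow> 'a) \<Rightarrow> bool" where
  "is_factor v u \<longleftrightarrow> (\<exists>k. \<forall>i < length v. u (k + i) = v ! i)"

end

theory Submission
  imports Defs
begin

text \<open>T3 is the map induced on [0, l) by the rotation x \<mapsto> x - e (mod 1): reading A or C is one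
  rotation step, reading B is two. Hence a point with itinerary w is moved by
  \<delta> = S - N e, where N is the number of rotation steps along w and S an integer, and the
  j copies of w in an occurrence of w^j start at x, x + \<delta>, ..., x + (j - 1) \<delta>. These points all
  have itinerary w, so no point n e + m with 0 \<le> n \<le> N separates them: the points n e + m avoid an
  interval of length (j - 1) |N e - S|.

  Choose k with q_k \<le> N < q_{k+1}. By Lagrange's best approximation theorem |N e - S| \<ge> |q_k e - p_k|,
  while the points n e + m with 0 \<le> n < q_k meet every interval of length |q_{k-1} e - p_{k-1}| + |q_k e - p_k|,
  which is less than (a_{k+1} + 2) |q_k e - p_k|. Hence j - 1 < a_{k+1} + 2.\<close>

section \<open>Continued fractions\<close>

text \<open>Indexing is shifted by one: cf_den e (Suc k) and cf_num e (Suc k) are the denominator q_k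
  and numerator p_k of the k-th convergent (with q_{-1} = 0, p_{-1} = 1), and
  cf_err e (Suc k) = |q_k e - p_k|.\<close>

fun cf_den :: "real \<Rightarrow> nat \<Rightarrow> int" where
  "cf_den e 0 = 0"
| "cf_den e (Suc 0) = 1"
| "cf_den e (Suc (Suc k)) = cf_quot e (Suc k) * cf_den e (Suc k) + cf_den e k"

fun cf_num :: "real \<Rightarrow> nat \<Rightarrow> int" where
  "cf_num e 0 = 1"
| "cf_num e (Suc 0) = 0"
| "cf_num e (Suc (Suc k)) = cf_quot e (Suc k) * cf_num e (Suc k) + cf_num e k"

definition cf_err :: "real \<Rightarrow> nat \<Rightarrow> real" where
  "cf_err e k = (\<Prod>i<k. cf_rem e i)"

lemma cf_err_Suc: "cf_err e (Suc k) = cf_err e k * cf_rem e k"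
  by (simp add: cf_err_def)

lemma one_div_cf_rem: "1 / cf_rem e k = of_int (cf_quot e (Suc k)) + cf_rem e (Suc k)"
  by (simp add: cf_quot_def frac_def)

lemma cf_num_den_det: "cf_num e (Suc k) * cf_den e k - cf_num e k * cf_den e (Suc k) = (-1) ^ Suc k"
  by (induction k) (simp_all add: algebra_simps)

lemma abs_diff_ge_of_small_combination:
  fixes u v n Q1 Q2 :: int and P1 P2 :: real
  assumes "0 \<le> Q1" "0 < P1" "0 < P2" "1 \<le> n" "n < Q2" "n = u * Q1 + v * Q2"
  shows "P1 \<le> \<bar>of_int u * P1 - of_int v * P2\<bar>"
proof -
  have big: "Q2 \<le> v * Q2" if "1 \<le> v" using that assms(4,5) by (simp add: mult_le_cancel_right1)
  have small: "v * Q2 \<le> 0" if "v \<le> 0" using that assms(4,5) by (simp add: mult_nonpos_nonneg)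
  consider "1 \<le> u" | "u \<le> -1" | "u = 0" by linarith
  then show ?thesis
  proof cases
    case 1
    have "0 \<le> u * Q1" using 1 assms(1) by simp
    have "v \<le> 0"
    proof (rule ccontr)
      assume "\<not> v \<le> 0"
      then have "Q2 \<le> v * Q2" by (intro big) simp
      then show False using \<open>0 \<le> u * Q1\<close> assms(5,6) by linarith
    qed
    then have "of_int v * P2 \<le> 0" using assms(3) by (simp add: mult_nonpos_nonneg)
    moreover have "P1 \<le> of_int u * P1" using 1 assms(2) by simp
    ultimately show ?thesis by linarith
  next
    case 2
    have "u * Q1 \<le> 0" using 2 assms(1) by (simp add: mult_nonpos_nonneg)
    have "1 \<le> v"
    proof (rule ccontr)
      assume "\<not> 1 \<le> v"
      then have "v * Q2 \<le> 0" by (intro small) simp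
      then show False using \<open>u * Q1 \<le> 0\<close> assms(4,6) by linarith
    qed
    then have "0 \<le> of_int v * P2" using assms(3) by simp
    moreover have "of_int u * P1 \<le> - P1" using 2 assms(2) mult_right_mono[of "of_int u" "-1" P1] by simp
    ultimately show ?thesis by linarith
  next
    case 3
    then have "n = v * Q2" using assms(6) by simp
    then show ?thesis using big small assms(4,5) by linarith
  qed
qed

text \<open>Step from the last point n e + m at most y (in the downward version, from the first point
  above y + g).\<close>

lemma exists_point_in_interval_of_up_steps:
  fixes F :: "int set" and e g y :: real
  assumes "finite F" "F \<noteq> {}"
    and step: "\<And>n m. n \<in> F \<Longrightarrow> \<exists>n'\<in>F. \<exists>m'::int. \<exists>t. 0 < t \<and> t \<le> g \<and>
                  of_int n' * e + of_int m' = of_int n * e + of_int m + t"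
  shows "\<exists>n\<in>F. \<exists>m::int. y < of_int n * e + of_int m \<and> of_int n * e + of_int m \<le> y + g"
proof -
  define f where "f n = of_int n * e + of_int \<lfloor>y - of_int n * e\<rfloor>" for n :: int
  define M where "M = Max (f ` F)"
  have "M \<in> f ` F" unfolding M_def using assms(1,2) by simp
  then obtain n0 where n0: "n0 \<in> F" "M = f n0" by auto
  have le_M: "f n \<le> M" if "n \<in> F" for n unfolding M_def using assms(1) that by simp
  obtain n' m' t where nm: "n' \<in> F" "0 < t" "t \<le> g" "of_int n' * e + of_int m' = M + t"
    using step[OF n0(1), of "\<lfloor>y - of_int n0 * e\<rfloor>"] unfolding n0 f_def by auto
  have "y < M + t"
  proof (rule ccontr)
    assume "\<not> y < M + t"
    then have "m' \<le> \<lfloor>y - of_int n' * e\<rfloor>" using nm(4) by (simp add: le_floor_iff)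
    then have "M + t \<le> f n'" unfolding f_def using nm(4) by simp
    then show False using le_M[OF nm(1)] nm(2) by linarith
  qed
  moreover have "M \<le> y" unfolding n0 f_def by linarith
  ultimately show ?thesis using nm by (intro bexI[OF _ nm(1)] exI[of _ m']) auto
qed

lemma exists_point_in_interval_of_down_steps:
  fixes F :: "int set" and e g y :: real
  assumes "finite F" "F \<noteq> {}"
    and step: "\<And>n m. n \<in> F \<Longrightarrow> \<exists>n'\<in>F. \<exists>m'::int. \<exists>t. 0 < t \<and> t \<le> g \<and>
                  of_int n' * e + of_int m' = of_int n * e + of_int m - t"
  shows "\<exists>n\<in>F. \<exists>m::int. y < of_int n * e + of_int m \<and> of_int n * e + of_int m \<le> y + g"
proof -
  define f where "f n = of_int n * e + of_int (\<lfloor>y + g - of_int n * e\<rfloor> + 1)" for n :: int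
  define M where "M = Min (f ` F)"
  have "M \<in> f ` F" unfolding M_def using assms(1,2) by simp
  then obtain n0 where n0: "n0 \<in> F" "M = f n0" by auto
  have M_le: "M \<le> f n" if "n \<in> F" for n unfolding M_def using assms(1) that by simp
  obtain n' m' t where nm: "n' \<in> F" "0 < t" "t \<le> g" "of_int n' * e + of_int m' = M - t"
    using step[OF n0(1), of "\<lfloor>y + g - of_int n0 * e\<rfloor> + 1"] unfolding n0 f_def by auto
  have "M - t \<le> y + g"
  proof (rule ccontr)
    assume "\<not> M - t \<le> y + g"
    then have "\<lfloor>y + g - of_int n' * e\<rfloor> + 1 \<le> m'" using nm(4) by linarith
    then have "f n' \<le> M - t" unfolding f_def using nm(4) by simp
    then show False using M_le[OF nm(1)] nm(2) by linarith
  qed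
  moreover have "y + g < M" unfolding n0 f_def by linarith
  ultimately show ?thesis using nm by (intro bexI[OF _ nm(1)] exI[of _ m']) auto
qed

context
  fixes e :: real
  assumes irrational: "0 < e" "e < 1" "e \<notin> \<rat>"
begin

lemma cf_rem_bounds: "0 < cf_rem e k \<and> cf_rem e k < 1 \<and> cf_rem e k \<notin> \<rat>"
proof (induction k)
  case 0
  then show ?case using irrational by simp
next
  case (Suc k)
  define r where "r = cf_rem e k"
  have r: "0 < r" "r \<notin> \<rat>" using Suc r_def by auto
  have "1 / r \<notin> \<rat>"
    using r Rats_divide[OF Rats_1, of "1 / r"] by auto
  then have irr: "frac (1 / r) \<notin> \<rat>"
    using Rats_add[of "frac (1 / r)" "of_int \<lfloor>1 / r\<rfloor>"] by (auto simp: frac_def)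
  then have "frac (1 / r) \<noteq> 0" by (metis Rats_0)
  then show ?case using irr frac_ge_0[of "1 / r"] frac_lt_1[of "1 / r"] by (simp add: r_def)
qed

lemma cf_quot_Suc_ge_1: "1 \<le> cf_quot e (Suc k)"
proof -
  have "1 < 1 / cf_rem e k" using cf_rem_bounds[of k] by simp
  then show ?thesis by (simp add: cf_quot_def)
qed

lemma cf_err_pos: "0 < cf_err e k"
  unfolding cf_err_def using cf_rem_bounds by (intro prod_pos) auto

lemma cf_err_recurrence:
  "cf_err e k = of_int (cf_quot e (Suc k)) * cf_err e (Suc k) + cf_err e (Suc (Suc k))"
proof -
  have "cf_err e k = cf_err e (Suc k) * (1 / cf_rem e k)"
    using cf_rem_bounds[of k] by (simp add: cf_err_Suc)
  also have "\<dots> = of_int (cf_quot e (Suc k)) * cf_err e (Suc k) + cf_err e (Suc k) * cf_rem e (Suc k)"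
    by (simp only: one_div_cf_rem distrib_left mult.commute)
  finally show ?thesis by (simp only: cf_err_Suc[of e "Suc k"])
qed

lemma cf_err_sum_less:
  "cf_err e k + cf_err e (Suc k) < (of_int (cf_quot e (Suc k)) + 2) * cf_err e (Suc k)"
proof -
  have "cf_err e (Suc (Suc k)) < cf_err e (Suc k)"
    using cf_rem_bounds[of "Suc k"] cf_err_pos[of "Suc k"] by (simp add: cf_err_Suc[of e "Suc k"])
  then show ?thesis using cf_err_recurrence[of k] by (simp add: algebra_simps)
qed

lemma cf_den_approx: "of_int (cf_den e k) * e - of_int (cf_num e k) = (-1) ^ Suc k * cf_err e k"
proof (induction k rule: induct_nat_012)
  case 0
  then show ?case by (simp add: cf_err_def)
next
  case 1
  then show ?case by (simp add: cf_err_def)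
next
  case (ge2 k)
  let ?a = "real_of_int (cf_quot e (Suc k))"
  have IH1: "of_int (cf_den e (Suc k)) * e - of_int (cf_num e (Suc k)) = (-1) ^ k * cf_err e (Suc k)"
    using ge2.IH(2) by simp
  have IH0: "of_int (cf_den e k) * e - of_int (cf_num e k) = - ((-1) ^ k * cf_err e k)"
    using ge2.IH(1) by simp
  have "of_int (cf_den e (Suc (Suc k))) * e - of_int (cf_num e (Suc (Suc k)))
      = ?a * (of_int (cf_den e (Suc k)) * e - of_int (cf_num e (Suc k)))
        + (of_int (cf_den e k) * e - of_int (cf_num e k))"
    by (simp add: algebra_simps)
  also have "\<dots> = - ((-1) ^ k * (cf_err e k - ?a * cf_err e (Suc k)))"
    unfolding IH0 IH1 by (simp add: algebra_simps)
  also have "\<dots> = (-1) ^ Suc (Suc (Suc k)) * cf_err e (Suc (Suc k))"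
    using cf_err_recurrence[of k] by simp
  finally show ?case .
qed

lemma cf_den_nonneg_mono: "0 \<le> cf_den e k \<and> cf_den e k \<le> cf_den e (Suc k)"
proof (induction k)
  case 0
  then show ?case by simp
next
  case (Suc k)
  have "cf_den e (Suc k) \<le> cf_quot e (Suc k) * cf_den e (Suc k)"
    using Suc cf_quot_Suc_ge_1[of k] mult_right_mono[of 1 "cf_quot e (Suc k)"] by fastforce
  then show ?case using Suc by simp
qed

lemma incseq_cf_den: "incseq (cf_den e)"
  using cf_den_nonneg_mono by (simp add: incseq_SucI)

lemma cf_den_Suc_ge_1: "1 \<le> cf_den e (Suc k)"
  using incseq_cf_den by (metis cf_den.simps(2) Suc_le_mono incseq_def zero_le)

lemma cf_den_ge: "int k \<le> cf_den e (Suc k)"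
proof (induction k rule: induct_nat_012)
  case (ge2 k)
  have "cf_den e (Suc (Suc k)) \<le> cf_quot e (Suc (Suc k)) * cf_den e (Suc (Suc k))"
    using cf_quot_Suc_ge_1[of "Suc k"] cf_den_Suc_ge_1[of "Suc k"]
      mult_right_mono[of 1 "cf_quot e (Suc (Suc k))"] by fastforce
  moreover have "cf_den e (Suc (Suc (Suc k)))
      = cf_quot e (Suc (Suc k)) * cf_den e (Suc (Suc k)) + cf_den e (Suc k)"
    by (simp only: cf_den.simps)
  ultimately show ?case using ge2.IH(2) cf_den_Suc_ge_1[of k] by linarith
qed (use cf_den_Suc_ge_1 cf_quot_Suc_ge_1 in auto)

lemma cf_den_bracket:
  assumes "1 \<le> N"
  obtains k where "cf_den e (Suc k) \<le> N" "N < cf_den e (Suc (Suc k))"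
proof -
  have ex: "\<exists>k. N < cf_den e (Suc (Suc k))"
    using cf_den_ge[of "Suc (nat N)"] by (intro exI[of _ "nat N"]) linarith
  define k where "k = (LEAST k. N < cf_den e (Suc (Suc k)))"
  have "N < cf_den e (Suc (Suc k))"
    unfolding k_def using ex by (rule LeastI_ex)
  moreover have "cf_den e (Suc k) \<le> N"
  proof (cases k)
    case (Suc k')
    then show ?thesis using not_less_Least[of k' "\<lambda>k. N < cf_den e (Suc (Suc k))"] k_def by force
  qed (use assms in simp)
  ultimately show ?thesis using that by blast
qed

lemma cf_best_approximation:
  assumes n: "1 \<le> n" "n < cf_den e (Suc (Suc k))"
  shows "cf_err e (Suc k) \<le> \<bar>of_int n * e - of_int m\<bar>"
proof -
  define Q1 where "Q1 = cf_den e (Suc k)"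
  define Q2 where "Q2 = cf_den e (Suc (Suc k))"
  define p1 where "p1 = cf_num e (Suc k)"
  define p2 where "p2 = cf_num e (Suc (Suc k))"
  define c :: int where "c = (-1) ^ k"
  have c: "c * c = 1" unfolding c_def by (simp flip: power_mult_distrib)
  have det: "p2 * Q1 - p1 * Q2 = c"
    using cf_num_den_det[of e "Suc k"] unfolding c_def p1_def p2_def Q1_def Q2_def by simp
  \<comment> \<open>the coordinates of (n, m) in the unimodular basis (Q1, p1), (Q2, p2)\<close>
  define u where "u = c * (n * p2 - m * Q2)"
  define v where "v = c * (m * Q1 - n * p1)"
  have "u * Q1 + v * Q2 = c * c * n" "u * p1 + v * p2 = c * c * m"
    unfolding u_def v_def det[symmetric] by (simp_all add: algebra_simps)
  then have nuv: "n = u * Q1 + v * Q2" and muv: "m = u * p1 + v * p2"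
    unfolding c by simp_all
  have D1: "of_int Q1 * e - of_int p1 = (-1) ^ k * cf_err e (Suc k)"
    using cf_den_approx[of "Suc k"] unfolding Q1_def p1_def by simp
  have D2: "of_int Q2 * e - of_int p2 = - ((-1) ^ k * cf_err e (Suc (Suc k)))"
    using cf_den_approx[of "Suc (Suc k)"] unfolding Q2_def p2_def
    by (simp del: cf_den.simps cf_num.simps)
  have "of_int n * e - of_int m
      = of_int u * (of_int Q1 * e - of_int p1) + of_int v * (of_int Q2 * e - of_int p2)"
    unfolding nuv muv by (simp add: algebra_simps)
  also have "\<dots> = (-1) ^ k * (of_int u * cf_err e (Suc k) - of_int v * cf_err e (Suc (Suc k)))"
    unfolding D1 D2 by (simp add: algebra_simps)
  finally have "\<bar>of_int n * e - of_int m\<bar>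
      = \<bar>of_int u * cf_err e (Suc k) - of_int v * cf_err e (Suc (Suc k))\<bar>"
    by (simp add: abs_mult)
  moreover have "cf_err e (Suc k) \<le> \<bar>of_int u * cf_err e (Suc k) - of_int v * cf_err e (Suc (Suc k))\<bar>"
    using cf_den_nonneg_mono cf_err_pos n
    by (intro abs_diff_ge_of_small_combination[OF _ _ _ n(1) _ nuv]) (auto simp: Q1_def Q2_def)
  ultimately show ?thesis by simp
qed

text \<open>The steps are n \<mapsto> n + q_{k-1} and n \<mapsto> n + q_{k-1} - q_k; by the alternating signs of
  q_i e - p_i they move by |q_{k-1} e - p_{k-1}| and |q_{k-1} e - p_{k-1}| + |q_k e - p_k| in the
  same direction.\<close>
lemma cf_points_dense:
  assumes L: "cf_err e k + cf_err e (Suc k) \<le> L"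
  obtains n m :: int where "0 \<le> n" "n < cf_den e (Suc k)"
    "y < of_int n * e + of_int m" "of_int n * e + of_int m \<le> y + L"
proof -
  define Q0 where "Q0 = cf_den e k"
  define Q1 where "Q1 = cf_den e (Suc k)"
  define g where "g = cf_err e k + cf_err e (Suc k)"
  define s :: real where "s = (-1) ^ Suc k"
  have Q: "0 \<le> Q0" "Q0 \<le> Q1" "1 \<le> Q1"
    using cf_den_nonneg_mono[of k] cf_den_Suc_ge_1[of k] unfolding Q0_def Q1_def by auto
  have err: "0 < cf_err e k" "0 < cf_err e (Suc k)" using cf_err_pos by auto
  have D0: "of_int Q0 * e - of_int (cf_num e k) = s * cf_err e k"
    using cf_den_approx[of k] unfolding Q0_def s_def .
  have D1: "of_int Q1 * e - of_int (cf_num e (Suc k)) = - s * cf_err e (Suc k)"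
    using cf_den_approx[of "Suc k"] unfolding Q1_def s_def by simp
  have step: "\<exists>n'\<in>{0..<Q1}. \<exists>m'::int. \<exists>t. 0 < t \<and> t \<le> g \<and>
                of_int n' * e + of_int m' = of_int n * e + of_int m + s * t"
    if "n \<in> {0..<Q1}" for n m
  proof (cases "n + Q0 < Q1")
    case True
    have "of_int (n + Q0) * e + of_int (m - cf_num e k) = of_int n * e + of_int m + s * cf_err e k"
      using D0 by (simp add: algebra_simps)
    then show ?thesis using True that Q err unfolding g_def
      by (intro bexI[of _ "n + Q0"] exI[of _ "m - cf_num e k"] exI[of _ "cf_err e k"]) auto
  next
    case False
    have "of_int (n + Q0 - Q1) * e + of_int (m - cf_num e k + cf_num e (Suc k))
        = of_int n * e + of_int m + s * g"
      using D0 D1 unfolding g_def by (simp add: algebra_simps)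
    then show ?thesis using False that Q err unfolding g_def
      by (intro bexI[of _ "n + Q0 - Q1"] exI[of _ "m - cf_num e k + cf_num e (Suc k)"] exI[of _ g])
        (auto simp: g_def)
  qed
  have "\<exists>n\<in>{0..<Q1}. \<exists>m::int. y < of_int n * e + of_int m \<and> of_int n * e + of_int m \<le> y + g"
  proof (cases "even k")
    case True
    then have "s = -1" unfolding s_def by simp
    then show ?thesis using Q step by (intro exists_point_in_interval_of_down_steps) auto
  next
    case False
    then have "s = 1" unfolding s_def by simp
    then show ?thesis using Q step by (intro exists_point_in_interval_of_up_steps) auto
  qed
  then show ?thesis using L that unfolding g_def Q1_def by force
qed

lemma cf_separation_bound:
  fixes N :: nat and S :: int and x x' :: real
  assumes "1 \<le> N"
    and same_floor: "\<And>n. n \<le> N \<Longrightarrow> \<lfloor>x - real n * e\<rfloor> = \<lfloor>x' - real n * e\<rfloor>"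
  obtains k where "\<bar>x' - x\<bar> < (of_int (cf_quot e (Suc k)) + 2) * \<bar>real N * e - of_int S\<bar>"
proof -
  obtain k where k: "cf_den e (Suc k) \<le> int N" "int N < cf_den e (Suc (Suc k))"
    using cf_den_bracket[of "int N"] assms(1) by auto
  have best: "cf_err e (Suc k) \<le> \<bar>real N * e - of_int S\<bar>"
    using cf_best_approximation[OF _ k(2), of S] assms(1) by simp
  have "\<bar>x' - x\<bar> < cf_err e k + cf_err e (Suc k)"
  proof (rule ccontr)
    assume "\<not> ?thesis"
    then have "cf_err e k + cf_err e (Suc k) \<le> \<bar>x' - x\<bar>" by simp
    then obtain n m :: int where nm: "0 \<le> n" "n < cf_den e (Suc k)"
      "min x x' < of_int n * e + of_int m" "of_int n * e + of_int m \<le> min x x' + \<bar>x' - x\<bar>"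
      by (rule cf_points_dense)
    have n: "real (nat n) = of_int n" "nat n \<le> N" using nm(1,2) k(1) by auto
    have "\<lfloor>min x x' - real (nat n) * e\<rfloor> < m"
      using nm(3) unfolding n(1) by (simp add: floor_less_iff)
    moreover have "m \<le> \<lfloor>max x x' - real (nat n) * e\<rfloor>"
      using nm(4) unfolding n(1) by (simp add: le_floor_iff abs_if max_def min_def split: if_splits)
    moreover have "\<lfloor>min x x' - real (nat n) * e\<rfloor> = \<lfloor>max x x' - real (nat n) * e\<rfloor>"
      using same_floor[OF n(2)] by (cases "x \<le> x'") (simp_all add: min_def max_def)
    ultimately show False by simp
  qed
  also have "\<dots> < (of_int (cf_quot e (Suc k)) + 2) * cf_err e (Suc k)"
    by (rule cf_err_sum_less)
  also have "\<dots> \<le> (of_int (cf_quot e (Suc k)) + 2) * \<bar>real N * e - of_int S\<bar>"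
    using best cf_quot_Suc_ge_1[of k] by (intro mult_left_mono) auto
  finally show ?thesis by (rule that)
qed

end

section \<open>The three interval exchange\<close>

definition letter_steps :: "letter \<Rightarrow> nat" where
  "letter_steps c = (case c of A \<Rightarrow> 1 | B \<Rightarrow> 2 | C \<Rightarrow> 1)"

definition letter_carry :: "letter \<Rightarrow> int" where
  "letter_carry c = (case c of A \<Rightarrow> 1 | B \<Rightarrow> 1 | C \<Rightarrow> 0)"

definition has_itinerary :: "real \<Rightarrow> real \<Rightarrow> real \<Rightarrow> letter list \<Rightarrow> bool" where
  "has_itinerary e l x ws \<longleftrightarrow> (\<forall>i < length ws. letter_of e l ((T3 e l ^^ i) x) = ws ! i)"

lemma has_itinerary_Cons:
  "has_itinerary e l x (c # ws) \<longleftrightarrow> letter_of e l x = c \<and> has_itinerary e l (T3 e l x) ws"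
  unfolding has_itinerary_def
  by (auto simp: less_Suc_eq_0_disj funpow_Suc_right simp del: funpow.simps)

definition word_shift :: "real \<Rightarrow> letter list \<Rightarrow> real" where
  "word_shift e w = of_int (sum_list (map letter_carry w)) - real (sum_list (map letter_steps w)) * e"

lemma length_power_word: "length (power_word w j) = j * length w"
  unfolding power_word_def by (induction j) auto

lemma nth_power_word:
  assumes "i < j" "s < length w"
  shows "power_word w j ! (i * length w + s) = w ! s"
  using assms
proof (induction j arbitrary: i)
  case (Suc j)
  then show ?case
    by (cases i) (auto simp: power_word_def nth_append length_power_word[unfolded power_word_def])
qed simp

lemma length_le_sum_letter_steps: "length ws \<le> sum_list (map letter_steps ws)"
  by (induction ws) (auto simp: letter_steps_def split: letter.splits)

context
  fixes e l :: real
  assumes params: "0 < e" "e < 1" "max e (1 - e) < l" "l < 1"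
begin

lemma T3_eq_rotation:
  assumes "0 \<le> x" "x < l"
  shows "T3 e l x = x - real (letter_steps (letter_of e l x)) * e + of_int (letter_carry (letter_of e l x))"
  using params assms unfolding T3_def letter_of_def letter_steps_def letter_carry_def by auto

lemma T3_in_range:
  assumes "0 \<le> x" "x < l"
  shows "0 \<le> T3 e l x \<and> T3 e l x < l"
  using params assms unfolding T3_def by auto

lemma funpow_T3_in_range:
  assumes "0 \<le> x" "x < l"
  shows "0 \<le> (T3 e l ^^ i) x \<and> (T3 e l ^^ i) x < l"
  by (induction i) (use assms T3_in_range in auto)

lemma funpow_T3_itinerary:
  assumes "0 \<le> x" "x < l" "has_itinerary e l x ws"
  shows "(T3 e l ^^ length ws) x
           = x - real (sum_list (map letter_steps ws)) * e + of_int (sum_list (map letter_carry ws))"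
  using assms
proof (induction ws arbitrary: x)
  case (Cons c ws)
  have c: "letter_of e l x = c" and tl: "has_itinerary e l (T3 e l x) ws"
    using Cons.prems(3) by (simp_all add: has_itinerary_Cons)
  have "(T3 e l ^^ length (c # ws)) x = (T3 e l ^^ length ws) (T3 e l x)"
    by (simp add: funpow_Suc_right del: funpow.simps)
  also have "\<dots> = T3 e l x - real (sum_list (map letter_steps ws)) * e + of_int (sum_list (map letter_carry ws))"
    using Cons.IH[OF _ _ tl] T3_in_range[OF Cons.prems(1,2)] by blast
  finally show ?case using T3_eq_rotation[OF Cons.prems(1,2)] c by (simp add: algebra_simps)
qed simp

lemma floor_sub_below_letter_steps:
  assumes "0 \<le> x" "x < l" "n < letter_steps (letter_of e l x)"
  shows "\<lfloor>x - real n * e\<rfloor> = (if n = 0 then 0 else -1)"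
proof (cases "n = 0")
  case False
  then have "letter_of e l x = B" "n = 1"
    using assms(3) unfolding letter_steps_def by (auto split: letter.splits)
  then show ?thesis using params assms(1,2) unfolding letter_of_def by (auto simp: floor_eq_iff split: if_splits)
qed (use params assms in \<open>simp add: floor_eq_iff\<close>)

lemma floor_sub_eq_of_same_itinerary:
  assumes "0 \<le> x" "x < l" "0 \<le> x'" "x' < l"
    and "has_itinerary e l x ws" "has_itinerary e l x' ws"
    and "n \<le> sum_list (map letter_steps ws)"
  shows "\<lfloor>x - real n * e\<rfloor> = \<lfloor>x' - real n * e\<rfloor>"
  using assms
proof (induction ws arbitrary: x x' n)
  case Nil
  then have "\<lfloor>x\<rfloor> = 0" "\<lfloor>x'\<rfloor> = 0" using params by (simp_all add: floor_eq_iff)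
  then show ?case using Nil by simp
next
  case (Cons c ws)
  have c: "letter_of e l x = c" "letter_of e l x' = c"
    and tl: "has_itinerary e l (T3 e l x) ws" "has_itinerary e l (T3 e l x') ws"
    using Cons.prems(5,6) by (simp_all add: has_itinerary_Cons)
  show ?case
  proof (cases "n < letter_steps c")
    case True
    then show ?thesis using floor_sub_below_letter_steps c Cons.prems(1-4) by simp
  next
    case False
    define n' where "n' = n - letter_steps c"
    have "n' \<le> sum_list (map letter_steps ws)" using Cons.prems(7) unfolding n'_def by simp
    then have "\<lfloor>T3 e l x - real n' * e\<rfloor> = \<lfloor>T3 e l x' - real n' * e\<rfloor>"
      using Cons.IH[OF _ _ _ _ tl] T3_in_range Cons.prems(1-4) by blast
    moreover have "x - real n * e = T3 e l x - real n' * e - of_int (letter_carry c)"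
      and "x' - real n * e = T3 e l x' - real n' * e - of_int (letter_carry c)"
      using T3_eq_rotation[of x] T3_eq_rotation[of x'] c Cons.prems(1-4) False unfolding n'_def
      by (auto simp: of_nat_diff algebra_simps)
    ultimately show ?thesis by (simp add: floor_diff_of_int)
  qed
qed

lemma power_factor_orbit:
  assumes "0 \<le> x0" "x0 < l" "is_factor (power_word w j) (iet_word e l x0)"
  obtains x where "\<And>i. i < j \<Longrightarrow> 0 \<le> x + real i * word_shift e w \<and> x + real i * word_shift e w < l
                                      \<and> has_itinerary e l (x + real i * word_shift e w) w"
proof -
  obtain k0 where
    k0: "\<And>i. i < length (power_word w j) \<Longrightarrow> iet_word e l x0 (k0 + i) = power_word w j ! i"
    using assms(3) unfolding is_factor_def by blast
  define y where "y i = (T3 e l ^^ (k0 + i * length w)) x0" for i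
  have y_range: "0 \<le> y i \<and> y i < l" for i
    unfolding y_def by (rule funpow_T3_in_range[OF assms(1,2)])
  have y_itinerary: "has_itinerary e l (y i) w" if "i < j" for i
    unfolding has_itinerary_def
  proof (intro allI impI)
    fix s assume s: "s < length w"
    have "Suc i * length w \<le> j * length w" using that by (intro mult_right_mono) auto
    then have "i * length w + s < j * length w" using s by simp
    moreover have "(T3 e l ^^ s) (y i) = (T3 e l ^^ (s + (k0 + i * length w))) x0"
      unfolding y_def by (simp only: funpow_add o_apply)
    then have "(T3 e l ^^ s) (y i) = (T3 e l ^^ (k0 + (i * length w + s))) x0"
      by (simp add: ac_simps)
    ultimately have "letter_of e l ((T3 e l ^^ s) (y i)) = power_word w j ! (i * length w + s)"
      using k0[of "i * length w + s"] unfolding iet_word_def length_power_word by simp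
    then show "letter_of e l ((T3 e l ^^ s) (y i)) = w ! s"
      using nth_power_word[OF that s] by simp
  qed
  have shift: "y 0 + real i * word_shift e w = y i" if "i < j" for i
    using that
  proof (induction i)
    case (Suc i)
    have "y (Suc i) = (T3 e l ^^ (length w + (k0 + i * length w))) x0"
      unfolding y_def by (simp add: ac_simps)
    also have "\<dots> = (T3 e l ^^ length w) (y i)"
      unfolding y_def by (simp only: funpow_add o_apply)
    also have "\<dots> = y i + word_shift e w"
      using funpow_T3_itinerary y_range[of i] y_itinerary[of i] Suc.prems unfolding word_shift_def by simp
    finally show ?case using Suc by (simp add: algebra_simps)
  qed simp
  show ?thesis by (rule that[of "y 0"]) (simp add: shift y_range y_itinerary)
qed

end

lemma power_factor_exponent_bound:
  assumes "0 < e" "e < 1" "e \<notin> \<rat>" "max e (1 - e) < l" "l < 1" "0 \<le> x0" "x0 < l" "w \<noteq> []"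
    and "is_factor (power_word w j) (iet_word e l x0)"
  obtains k where "int j \<le> cf_quot e (Suc k) + 2"
proof (cases "j = 0")
  case True
  then show ?thesis using that[of 0] cf_quot_Suc_ge_1[OF assms(1-3), of 0] by simp
next
  case False
  define \<delta> where "\<delta> = word_shift e w"
  define N where "N = sum_list (map letter_steps w)"
  define S where "S = sum_list (map letter_carry w)"
  obtain x where points: "\<And>i. i < j \<Longrightarrow> 0 \<le> x + real i * \<delta> \<and> x + real i * \<delta> < l
                                       \<and> has_itinerary e l (x + real i * \<delta>) w"
    using power_factor_orbit[OF assms(1,2,4,5,6,7,9)] unfolding \<delta>_def by blast
  have first: "0 \<le> x" "x < l" "has_itinerary e l x w"
    using points[of 0] False by simp_all
  have last: "0 \<le> x + real (j - 1) * \<delta>" "x + real (j - 1) * \<delta> < l"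
    "has_itinerary e l (x + real (j - 1) * \<delta>) w"
    using points[of "j - 1"] False by simp_all
  have "1 \<le> N" using length_le_sum_letter_steps[of w] assms(8) unfolding N_def by (cases w) auto
  moreover have "\<lfloor>x - real n * e\<rfloor> = \<lfloor>(x + real (j - 1) * \<delta>) - real n * e\<rfloor>" if "n \<le> N" for n
    using floor_sub_eq_of_same_itinerary[OF assms(1,2,4,5) first(1,2) last(1,2) first(3) last(3)] that
    unfolding N_def .
  ultimately obtain k where
    "\<bar>(x + real (j - 1) * \<delta>) - x\<bar> < (of_int (cf_quot e (Suc k)) + 2) * \<bar>real N * e - of_int S\<bar>"
    by (rule cf_separation_bound[OF assms(1-3)])
  then have "real (j - 1) * \<bar>\<delta>\<bar> < (of_int (cf_quot e (Suc k)) + 2) * \<bar>\<delta>\<bar>"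
    unfolding \<delta>_def word_shift_def N_def S_def by (simp add: abs_mult abs_minus_commute)
  then have "real (j - 1) < of_int (cf_quot e (Suc k)) + 2"
    by (simp add: mult_less_cancel_right)
  then have "real_of_int (int j) < real_of_int (cf_quot e (Suc k) + 3)"
    using False by (simp add: of_nat_diff)
  then have "int j < cf_quot e (Suc k) + 3" by (simp only: of_int_less_iff)
  then show ?thesis by (intro that[of k]) linarith
qed

theorem corollary1:
  fixes e l x0 :: real and w :: "letter list" and j :: nat
  assumes "0 < e" "e < 1" "e \<notin> \<rat>"
    and "max e (1 - e) < l" "l < 1"
    and "0 \<le> x0" "x0 < l"
    and "w \<noteq> []"
    and "is_factor (power_word w j) (iet_word e l x0)"
  shows "ereal (real j) \<le> 2 + (SUP n\<in>UNIV. ereal (real_of_int (cf_quot e n)))"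
proof -
  obtain k where "int j \<le> cf_quot e (Suc k) + 2"
    by (rule power_factor_exponent_bound[OF assms])
  then have "ereal (real j) \<le> 2 + ereal (real_of_int (cf_quot e (Suc k)))"
    by (simp add: numeral_eq_ereal)
  also have "\<dots> \<le> 2 + (SUP n\<in>UNIV. ereal (real_of_int (cf_quot e n)))"
    by (intro add_left_mono SUP_upper) simp
  finally show ?thesis .
qed

end
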